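(* For every 3-periodic of the elliptic billiard, the product of the cosines of the three interior angles $\theta_1',\theta_2',\theta_3'$ of its outer triangle satisfies $$\prod_{i=1}^3\cos\theta_i'=\frac{JL}{4}-1,$$ where $J$ and $L$ are the (family-invariant) Joachimsthal constant and perimeter; in particular this product is the same for all 3-periodics.
   Context: The elliptic billiard is $\mathcal{E}: x^2/a^2+y^2/b^2=1$, $a>b>0$, $c=\sqrt{a^2-b^2}$. A 3-periodic is a triangle $P_1P_2P_3$ inscribed in $\mathcal{E}$ that is a closed billiard trajectory (at each vertex the normal to $\mathcal{E}$ bisects the angle between the two incident sides); all 3-periodics are tangent to a common confocal elliptic caustic. The outer triangle has as sides the tangent lines to $\mathcal{E}$ at $P_1,P_2,P_3$. The perimeter $L$ is the same for all 3-periodics. Joachimsthal's constant is $J=\frac12\nabla f(P_i)\cdot\hat v$, where $f(x,y)=x^2/a^2+y^2/b^2$, $\nabla f=2(x/a^2,y/b^2)$, and $\hat v$ is the unit direction of the trajectory at $P_i$ (outgoing, oriented so that $J>0$); it is the same at every vertex and for every 3-periodic. Explicitly, with $\delta=\sqrt{a^4-a^2b^2+b^4}$: $J=\sqrt{2\delta-a^2-b^2}/c^2$ and $L=2(\delta+a^2+b^2)J$. Moreover $\sum_{i=1}^3\cos\theta_i=JL-3$ for the interior angles $\theta_i$ of the 3-periodic. *)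

theory Defs
  imports "HOL-Analysis.Analysis"
begin

definition on_ellipse :: "real \<Rightarrow> real \<Rightarrow> real \<times> real \<Rightarrow> bool" where
  "on_ellipse a b P \<longleftrightarrow> (fst P)^2 / a^2 + (snd P)^2 / b^2 = 1"

text \<open>Half the gradient of f(x,y) = x^2/a^2 + y^2/b^2: the outward normal of the ellipse.\<close>
definition ell_normal :: "real \<Rightarrow> real \<Rightarrow> real \<times> real \<Rightarrow> real \<times> real" where
  "ell_normal a b P = (fst P / a^2, snd P / b^2)"

text \<open>Reflection law at vertex P with neighbouring vertices A and B: the normal
  to the ellipse at P makes equal angles with the two sides PA and PB
  (i.e. it bisects the angle APB).\<close>
definition billiard_bounce :: "real \<Rightarrow> real \<Rightarrow> real \<times> real \<Rightarrow> real \<times> real \<Rightarrow> real \<times> real \<Rightarrow> bool" where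
  "billiard_bounce a b A P B \<longleftrightarrow>
     inner ((A - P) /\<^sub>R norm (A - P)) (ell_normal a b P)
       = inner ((B - P) /\<^sub>R norm (B - P)) (ell_normal a b P)"

definition three_periodic :: "real \<Rightarrow> real \<Rightarrow> real \<times> real \<Rightarrow> real \<times> real \<Rightarrow> real \<times> real \<Rightarrow> bool" where
  "three_periodic a b P1 P2 P3 \<longleftrightarrow>
     on_ellipse a b P1 \<and> on_ellipse a b P2 \<and> on_ellipse a b P3 \<and>
     P1 \<noteq> P2 \<and> P2 \<noteq> P3 \<and> P3 \<noteq> P1 \<and>
     billiard_bounce a b P3 P1 P2 \<and> billiard_bounce a b P1 P2 P3 \<and> billiard_bounce a b P2 P3 P1"

definition tangent_line :: "real \<Rightarrow> real \<Rightarrow> real \<times> real \<Rightarrow> (real \<times> real) set" where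
  "tangent_line a b P = {X. fst X * fst P / a^2 + snd X * snd P / b^2 = 1}"

definition outer_vertex :: "real \<Rightarrow> real \<Rightarrow> real \<times> real \<Rightarrow> real \<times> real \<Rightarrow> real \<times> real" where
  "outer_vertex a b P Q = (THE X. X \<in> tangent_line a b P \<and> X \<in> tangent_line a b Q)"

definition vec_angle :: "real \<times> real \<Rightarrow> real \<times> real \<Rightarrow> real" where
  "vec_angle u v = arccos (inner u v / (norm u * norm v))"

text \<open>Interior angle of the outer triangle at the vertex where the tangents at P and Q
  meet; the sides through that vertex contain the tangency points P and Q.\<close>
definition outer_angle :: "real \<Rightarrow> real \<Rightarrow> real \<times> real \<Rightarrow> real \<times> real \<Rightarrow> real" where
  "outer_angle a b P Q = (let X = outer_vertex a b P Q in vec_angle (P - X) (Q - X))"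

definition delta_ell :: "real \<Rightarrow> real \<Rightarrow> real" where
  "delta_ell a b = sqrt (a^4 - a^2 * b^2 + b^4)"

definition joachimsthal3 :: "real \<Rightarrow> real \<Rightarrow> real" where
  "joachimsthal3 a b = sqrt (2 * delta_ell a b - a^2 - b^2) / (a^2 - b^2)"

definition perimeter3 :: "real \<Rightarrow> real \<Rightarrow> real" where
  "perimeter3 a b = 2 * (delta_ell a b + a^2 + b^2) * joachimsthal3 a b"

end

theory Submission
  imports Defs
begin

(*
  Write the vertices as P_i = (a x_i, b y_i) with (x_i, y_i) = (cos t_i, sin t_i). The
  reflection law says that (1 - cos (t_i - t_j)) / |P_i P_j| is the same number J for all three
  sides; squaring, every side satisfies

    cos (t_i - t_j) - k cos (t_i + t_j) = 1 - k r,

  where k = J^2 (a^2 - b^2) and r = (a^2 + b^2) / (a^2 - b^2).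

  In z_i = exp (i t_i) this is a symmetric biquadratic relation between z_i and z_j. Since it
  holds for all three pairs, Vieta's formulas give z1 z2 + z2 z3 + z3 z1 = -k and
  z1 + z2 + z3 = -k z1 z2 z3, together with 2 k r = 3 - k^2, which determines J and hence J L.
  At the vertex of the outer triangle where the tangents at P_i and P_j meet, the cosine of the
  angle is -(b^2 x_i x_j + a^2 y_i y_j) divided by the norms of the two tangent vectors, and the
  side relation turns the numerator into a multiple of cos (t_i - t_j) - 1. The product of the three cosines thereby becomes a ratio of
  the discriminant of z1, z2, z3 to the product of the z_i^4 - 2 r z_i^2 + 1, and evaluating both
  through the symmetric functions gives (k r - 1) / 4 = J L / 4 - 1.
*)

section \<open>Eccentric-angle coordinates\<close>

lemma on_ellipse_unit_param:
  assumes "on_ellipse a b P" "a \<noteq> 0" "b \<noteq> 0"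
  obtains x y where "P = (a*x, b*y)" "x^2 + y^2 = 1"
proof
  show "P = (a*(fst P / a), b*(snd P / b))" using assms(2,3) by simp
  show "(fst P / a)^2 + (snd P / b)^2 = 1" using assms(1) by (simp add: on_ellipse_def power_divide)
qed

lemma inner_ell_normal_unit:
  assumes "a \<noteq> 0" "b \<noteq> 0" "x^2 + y^2 = 1"
  shows "inner ((a*x', b*y') - (a*x, b*y)) (ell_normal a b (a*x, b*y)) = x*x' + y*y' - 1"
proof -
  have "inner ((a*x', b*y') - (a*x, b*y)) (ell_normal a b (a*x, b*y))
      = (a*x' - a*x)*(a*x/a^2) + (b*y' - b*y)*(b*y/b^2)"
    by (simp add: ell_normal_def)
  also have "\<dots> = (x' - x)*x + (y' - y)*y"
    using assms(1,2) by (simp add: field_simps power2_eq_square)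
  also have "\<dots> = x*x' + y*y' - 1" using assms(3) by (simp add: algebra_simps power2_eq_square)
  finally show ?thesis .
qed

lemma billiard_bounce_unit:
  assumes "a \<noteq> 0" "b \<noteq> 0" "x^2 + y^2 = 1"
    and "billiard_bounce a b (a*xA, b*yA) (a*x, b*y) (a*xB, b*yB)"
  shows "(1 - (x*xA + y*yA)) / norm ((a*xA, b*yA) - (a*x, b*y))
    = (1 - (x*xB + y*yB)) / norm ((a*xB, b*yB) - (a*x, b*y))"
proof -
  have "(x*xA + y*yA - 1) / norm ((a*xA, b*yA) - (a*x, b*y))
      = (x*xB + y*yB - 1) / norm ((a*xB, b*yB) - (a*x, b*y))"
    using assms(4)
    unfolding billiard_bounce_def inner_scaleR_left inner_ell_normal_unit[OF assms(1-3)] by (simp add: divide_inverse_commute)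
  then show ?thesis by (metis minus_diff_eq minus_divide_left)
qed

lemma norm_chord_unit_sq:
  assumes "x^2 + y^2 = 1" "x'^2 + y'^2 = 1"
  shows "(norm ((a*x', b*y') - (a*x, b*y)))^2
    = (1 - (x*x' + y*y'))*((a^2 + b^2) - (a^2 - b^2)*(x*x' - y*y'))"
proof -
  have "(norm ((a*x', b*y') - (a*x, b*y)))^2 = (a*x' - a*x)^2 + (b*y' - b*y)^2"
    by (simp add: norm_Pair)
  also have "\<dots> = (1 - (x*x' + y*y'))*((a^2 + b^2) - (a^2 - b^2)*(x*x' - y*y'))"
    using assms by algebra
  finally show ?thesis .
qed

lemma unit_inner_lt_1:
  fixes x y x' y' :: real
  assumes "x^2 + y^2 = 1" "x'^2 + y'^2 = 1" "(x, y) \<noteq> (x', y')"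
  shows "x*x' + y*y' < 1"
proof -
  have "0 < (x - x')^2 + (y - y')^2" using assms(3) by (simp add: sum_power2_gt_zero_iff)
  also have "(x - x')^2 + (y - y')^2 = 2*(1 - (x*x' + y*y'))" using assms(1,2) by algebra
  finally show ?thesis by simp
qed

lemma unit_cross_nonzero:
  fixes x y x' y' :: real
  assumes "x^2 + y^2 = 1" "x'^2 + y'^2 = 1" "(x, y) \<noteq> (x', y')" "x*x' + y*y' \<noteq> -1"
  shows "x*y' - x'*y \<noteq> 0"
proof -
  have "(x*y' - x'*y)^2 = (1 - (x*x' + y*y'))*(1 + (x*x' + y*y'))" using assms(1,2) by algebra
  moreover have "1 - (x*x' + y*y') \<noteq> 0" using unit_inner_lt_1[OF assms(1-3)] by simp
  moreover have "1 + (x*x' + y*y') \<noteq> 0" using assms(4) by linarith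
  ultimately have "(x*y' - x'*y)^2 \<noteq> 0" by simp
  then show ?thesis by simp
qed

lemma chord_relation_unit:
  assumes "x^2 + y^2 = 1" "x'^2 + y'^2 = 1" "(x, y) \<noteq> (x', y')" "a \<noteq> 0" "b \<noteq> 0"
    and g: "(1 - (x*x' + y*y')) / norm ((a*x', b*y') - (a*x, b*y)) = g"
  shows "x*x' + y*y' - g^2*(a^2 - b^2)*(x*x' - y*y') = 1 - g^2*(a^2 + b^2)"
proof -
  define l where "l = norm ((a*x', b*y') - (a*x, b*y))"
  have "l \<noteq> 0" using assms(3-5) unfolding l_def by (auto simp: zero_prod_def)
  with g have "1 - (x*x' + y*y') = g*l" unfolding l_def by (simp add: field_simps)
  then have "(1 - (x*x' + y*y'))*(1 - (x*x' + y*y'))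
      = (1 - (x*x' + y*y'))*(g^2*((a^2 + b^2) - (a^2 - b^2)*(x*x' - y*y')))"
    using norm_chord_unit_sq[OF assms(1,2), of a b] unfolding l_def
    by (simp add: power_mult_distrib power2_eq_square mult_ac)
  moreover have "1 - (x*x' + y*y') \<noteq> 0" using unit_inner_lt_1[OF assms(1-3)] by simp
  ultimately have "1 - (x*x' + y*y') = g^2*((a^2 + b^2) - (a^2 - b^2)*(x*x' - y*y'))" by simp
  then show ?thesis by algebra
qed

section \<open>Angles of the outer triangle\<close>

lemma tangent_line_unit:
  assumes "a \<noteq> 0" "b \<noteq> 0"
  shows "X \<in> tangent_line a b (a*x, b*y) \<longleftrightarrow> fst X / a * x + snd X / b * y = 1"
  using assms by (simp add: tangent_line_def power2_eq_square)

lemma outer_vertex_unit: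
  assumes "a \<noteq> 0" "b \<noteq> 0" and unit: "x^2 + y^2 = 1" "x'^2 + y'^2 = 1"
    and cross: "x*y' - x'*y \<noteq> 0"
  shows "outer_vertex a b (a*x, b*y) (a*x', b*y')
    = (a*(x + x') / (1 + (x*x' + y*y')), b*(y + y') / (1 + (x*x' + y*y')))"
    (is "_ = ?V")
proof -
  define c where "c = 1 + (x*x' + y*y')"
  have "c*(1 - (x*x' + y*y')) = (x*y' - x'*y)^2" unfolding c_def using unit by algebra
  with cross have c: "c \<noteq> 0" by auto
  have "fst X / a * x + snd X / b * y = 1 \<and> fst X / a * x' + snd X / b * y' = 1 \<longleftrightarrow> X = ?V"
    for X
  proof
    assume "fst X / a * x + snd X / b * y = 1 \<and> fst X / a * x' + snd X / b * y' = 1"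
    then have "(fst X / a * c - (x + x'))*(x*y' - x'*y) = 0"
      "(snd X / b * c - (y + y'))*(x*y' - x'*y) = 0"
      unfolding c_def using unit by algebra+
    with cross have "fst X / a * c = x + x'" "snd X / b * c = y + y'" by auto
    with assms(1,2) c show "X = ?V"
      unfolding c_def[symmetric] by (simp add: prod_eq_iff field_simps)
  next
    assume "X = ?V"
    with assms(1,2) have X: "fst X / a = (x + x') / c" "snd X / b = (y + y') / c"
      unfolding c_def by simp_all
    have "fst X / a * x + snd X / b * y = ((x + x')*x + (y + y')*y) / c"
      "fst X / a * x' + snd X / b * y' = ((x + x')*x' + (y + y')*y') / c"
      unfolding X using c by (simp_all add: field_simps)
    moreover have "(x + x')*x + (y + y')*y = c" "(x + x')*x' + (y + y')*y' = c"
      unfolding c_def using unit by algebra+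
    ultimately show "fst X / a * x + snd X / b * y = 1 \<and> fst X / a * x' + snd X / b * y' = 1"
      using c by simp
  qed
  then show ?thesis unfolding outer_vertex_def tangent_line_unit[OF assms(1,2)] by simp
qed

lemma cos_vec_angle: "cos (vec_angle u v) = inner u v / (norm u * norm v)"
proof -
  have "\<bar>inner u v\<bar> \<le> norm u * norm v" by (rule Cauchy_Schwarz_ineq2)
  then have "\<bar>inner u v / (norm u * norm v)\<bar> \<le> 1"
    by (cases "norm u * norm v = 0") (simp_all add: abs_divide divide_le_eq_1)
  then show ?thesis unfolding vec_angle_def by (rule cos_arccos_abs)
qed

lemma vec_angle_scaleR:
  assumes "l \<noteq> 0"
  shows "vec_angle (l *\<^sub>R u) (l *\<^sub>R v) = vec_angle u v"
proof -
  have "norm (l *\<^sub>R u) * norm (l *\<^sub>R v) = \<bar>l\<bar>^2 * (norm u * norm v)"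
    by (simp add: power2_eq_square mult_ac)
  then have "norm (l *\<^sub>R u) * norm (l *\<^sub>R v) = l^2 * (norm u * norm v)" by simp
  moreover have "inner (l *\<^sub>R u) (l *\<^sub>R v) = l^2 * inner u v" by (simp add: power2_eq_square)
  moreover have "l^2 \<noteq> 0" using assms by simp
  ultimately show ?thesis
    unfolding vec_angle_def by (simp only: mult_divide_mult_cancel_left_if if_False)
qed

lemma cos_outer_angle_unit:
  assumes "a \<noteq> 0" "b \<noteq> 0" and unit: "x^2 + y^2 = 1" "x'^2 + y'^2 = 1"
    and cross: "x*y' - x'*y \<noteq> 0"
  shows "cos (outer_angle a b (a*x, b*y) (a*x', b*y'))
    = - (b^2*x*x' + a^2*y*y') / (sqrt (b^2*x^2 + a^2*y^2) * sqrt (b^2*x'^2 + a^2*y'^2))"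
proof -
  define c where "c = 1 + (x*x' + y*y')"
  define l where "l = (x*y' - x'*y) / c"
  have "c*(1 - (x*x' + y*y')) = (x*y' - x'*y)^2" unfolding c_def using unit by algebra
  with cross have c: "c \<noteq> 0" by auto
  then have l: "l \<noteq> 0" unfolding l_def using cross by simp
  have "a*x - a*(x + x') / c = l * (a*y)" "b*y - b*(y + y') / c = l * (- (b*x))"
    "a*x' - a*(x + x') / c = l * (- (a*y'))" "b*y' - b*(y + y') / c = l * (b*x')"
    using c unit c_def unfolding l_def by (simp_all add: field_simps) algebra+
  then have "(a*x, b*y) - (a*(x + x') / c, b*(y + y') / c) = l *\<^sub>R (a*y, - (b*x))"
    "(a*x', b*y') - (a*(x + x') / c, b*(y + y') / c) = l *\<^sub>R (- (a*y'), b*x')"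
    by simp_all
  then have "outer_angle a b (a*x, b*y) (a*x', b*y') = vec_angle (a*y, - (b*x)) (- (a*y'), b*x')"
    unfolding outer_angle_def outer_vertex_unit[OF assms] c_def[symmetric] Let_def
    by (simp only: vec_angle_scaleR[OF l])
  moreover have "inner (a*y, - (b*x)) (- (a*y'), b*x') = - (b^2*x*x' + a^2*y*y')"
    by (simp add: power2_eq_square)
  moreover have "norm (a*y, - (b*x)) = sqrt (b^2*x^2 + a^2*y^2)"
    "norm (- (a*y'), b*x') = sqrt (b^2*x'^2 + a^2*y'^2)"
    by (simp_all add: norm_Pair power_mult_distrib add.commute)
  ultimately show ?thesis by (simp only: cos_vec_angle)
qed

lemma unit_weighted_sq_pos:
  fixes a b x y :: real
  assumes "x^2 + y^2 = 1" "a \<noteq> 0" "b \<noteq> 0"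
  shows "b^2*x^2 + a^2*y^2 > 0"
proof (cases "x = 0")
  case True
  then show ?thesis using assms by simp
next
  case False
  then show ?thesis using assms(3) by (simp add: add_pos_nonneg)
qed

section \<open>The side relation in complex coordinates\<close>

(* The side relation cos (s - t) - k cos (s + t) = 1 - k r in z = exp (i s), w = exp (i t),
   cleared of denominators (see chord_poly_unit_complex). *)
definition chord_poly :: "'a::comm_ring_1 \<Rightarrow> 'a \<Rightarrow> 'a \<Rightarrow> 'a \<Rightarrow> 'a" where
  "chord_poly k r z w = z^2 + w^2 - k*z^2*w^2 - k - 2*(1 - k*r)*z*w"

lemma chord_poly_vieta:
  fixes k r z1 z2 z3 :: "'a::field"
  assumes "chord_poly k r z1 z2 = 0" "chord_poly k r z1 z3 = 0" "z2 \<noteq> z3"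
  shows "(1 - k*z1^2)*(z2 + z3) = 2*(1 - k*r)*z1" and "(1 - k*z1^2)*(z2*z3) = z1^2 - k"
proof -
  have "(z2 - z3)*((1 - k*z1^2)*(z2 + z3) - 2*(1 - k*r)*z1)
      = chord_poly k r z1 z2 - chord_poly k r z1 z3"
    unfolding chord_poly_def by algebra
  with assms show sum: "(1 - k*z1^2)*(z2 + z3) = 2*(1 - k*r)*z1" by simp
  have "chord_poly k r z1 z2
      = z2*((1 - k*z1^2)*(z2 + z3) - 2*(1 - k*r)*z1) + z1^2 - k - (1 - k*z1^2)*(z2*z3)"
    unfolding chord_poly_def by algebra
  with assms(1) sum show "(1 - k*z1^2)*(z2*z3) = z1^2 - k" by simp
qed

lemma chord_poly_triangle_constraint:
  fixes k r z1 z2 z3 :: "'a::field"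
  assumes "chord_poly k r z1 z2 = 0" "chord_poly k r z1 z3 = 0" "chord_poly k r z2 z3 = 0"
    and "z2 \<noteq> z3" "k \<noteq> 0" "z1^4 - 2*r*z1^2 + 1 \<noteq> 0"
  shows "2*k*r = 3 - k^2"
proof -
  define d where "d = 1 - k*z1^2"
  note vieta = chord_poly_vieta[OF assms(1,2,4), folded d_def]
  have "d^2 * chord_poly k r z2 z3
      = (d*(z2 + z3))^2 - 2*d*(d*(z2*z3)) - k*(d*(z2*z3))^2 - k*d^2 - 2*(1 - k*r)*d*(d*(z2*z3))"
    unfolding chord_poly_def by algebra
  also have "\<dots> = k*(3 - k^2 - 2*k*r)*(z1^4 - 2*r*z1^2 + 1)"
    unfolding vieta unfolding d_def by algebra
  finally show ?thesis using assms(3,5,6) by simp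
qed

lemma chord_poly_symmetric_functions:
  fixes k r z1 z2 z3 :: "'a::field"
  assumes "chord_poly k r z1 z2 = 0" "chord_poly k r z1 z3 = 0"
    and "z2 \<noteq> z3" "1 - k*z1^2 \<noteq> 0" "2*k*r = 3 - k^2"
  shows "z1*z2 + z2*z3 + z3*z1 = -k" and "z1 + z2 + z3 = -k*(z1*z2*z3)"
proof -
  define d where "d = 1 - k*z1^2"
  note vieta = chord_poly_vieta[OF assms(1-3), folded d_def]
  have "d*(z1*z2 + z2*z3 + z3*z1 + k) = z1*(d*(z2 + z3)) + d*(z2*z3) + k*d" by algebra
  also have "\<dots> = z1^2*(3 - k^2 - 2*k*r)" unfolding vieta unfolding d_def by algebra
  finally show "z1*z2 + z2*z3 + z3*z1 = -k" using assms(4,5) d_def by (simp add: add_eq_0_iff)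
  have "d*(z1 + z2 + z3 + k*(z1*z2*z3)) = d*z1 + d*(z2 + z3) + k*z1*(d*(z2*z3))" by algebra
  also have "\<dots> = z1*(3 - k^2 - 2*k*r)" unfolding vieta unfolding d_def by algebra
  finally show "z1 + z2 + z3 = -k*(z1*z2*z3)" using assms(4,5) d_def by (simp add: add_eq_0_iff)
qed

(* Both sides are symmetric in z1, z2, z3; they are evaluated on the elementary symmetric
   functions -k w, -k, w with w = z1 z2 z3. *)
lemma discriminant_identity:
  fixes k r z1 z2 z3 :: "'a::field_char_0"
  assumes e2: "z1*z2 + z2*z3 + z3*z1 = -k" and e1: "z1 + z2 + z3 = -k*(z1*z2*z3)"
    and constraint: "2*k*r = 3 - k^2" and "k \<noteq> 0"
  shows "4*(k*r - 1)^2*((z1-z2)*(z1-z3)*(z2-z3))^2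
    = k^3*((z1^4 - 2*r*z1^2 + 1)*(z2^4 - 2*r*z2^2 + 1)*(z3^4 - 2*r*z3^2 + 1))"
proof -
  define w where "w = z1*z2*z3"
  have disc: "((z1-z2)*(z1-z3)*(z2-z3))^2 = k^4*w^2 + 4*k^3 + 4*k^3*w^4 + 18*k^2*w^2 - 27*w^2"
    using e1 e2 unfolding w_def by algebra
  have quartics: "(z1^4 - 2*r*z1^2 + 1)*(z2^4 - 2*r*z2^2 + 1)*(z3^4 - 2*r*z3^2 + 1)
    = w^4 + (k^2 + 2*k*w^2)^2 + (k^2*w^2 + 2*k)^2 + 1 - 2*r*w^2*(k^2 + 2*k*w^2)
      - 2*r*(k^2 + 2*k*w^2)*(k^2*w^2 + 2*k) - 2*r*(k^2*w^2 + 2*k) + (4*r^2 - 2)*w^2*(k^2*w^2 + 2*k)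
      + (4*r^2 - 2)*(k^2 + 2*k*w^2) - (8*r^3 - 6*r)*w^2"
    using e1 e2 unfolding w_def by algebra
  have r: "r = (3 - k^2)/(2*k)" using constraint \<open>k \<noteq> 0\<close> by (simp add: field_simps)
  show ?thesis
    unfolding disc quartics unfolding r using \<open>k \<noteq> 0\<close> by (simp add: field_simps) algebra
qed

lemma chord_poly_unit_complex:
  assumes "x^2 + y^2 = 1" "x'^2 + y'^2 = 1"
  shows "chord_poly (complex_of_real k) (complex_of_real r) (Complex x y) (Complex x' y')
    = 2 * Complex x y * Complex x' y' * complex_of_real (x*x' + y*y' - k*(x*x' - y*y') - (1 - k*r))"
  using assms unfolding chord_poly_def by (simp add: complex_eq_iff power2_eq_square) algebra

lemma unit_complex_diff_sq:
  assumes "x^2 + y^2 = 1" "x'^2 + y'^2 = 1"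
  shows "(Complex x y - Complex x' y')^2
    = 2 * Complex x y * Complex x' y' * complex_of_real (x*x' + y*y' - 1)"
  using assms by (simp add: complex_eq_iff power2_eq_square) algebra

lemma unit_complex_quartic:
  assumes "x^2 + y^2 = 1"
  shows "Complex x y ^ 4 - 2 * complex_of_real r * Complex x y ^ 2 + 1
    = - 2 * Complex x y ^ 2 * complex_of_real (r - (x^2 - y^2))"
  using assms by (simp add: complex_eq_iff power2_eq_square power4_eq_xxxx) algebra

lemma unit_complex_quartic_nonzero:
  assumes "x^2 + y^2 = 1" "r > 1"
  shows "Complex x y ^ 4 - 2 * complex_of_real r * Complex x y ^ 2 + 1 \<noteq> 0"
proof -
  have "x^2 - y^2 \<le> 1" using assms(1) zero_le_power2[of y] by linarith
  then have "r - (x^2 - y^2) \<noteq> 0" using assms(2) by linarith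
  moreover have "Complex x y \<noteq> 0" using assms(1) by (auto simp: complex_eq_iff)
  ultimately show ?thesis unfolding unit_complex_quartic[OF assms(1)]
    by (simp del: of_real_diff of_real_power)
qed

section \<open>Triangles whose sides satisfy a common relation\<close>

lemma chord_relations_not_antipodal:
  fixes k r x y x' y' p q :: real
  assumes "x'^2 + y'^2 = 1" "p^2 + q^2 = 1" "k \<noteq> 0" "r > 1"
    and "x*x' + y*y' - k*(x*x' - y*y') = 1 - k*r"
    and "x*p + y*q - k*(x*p - y*q) = 1 - k*r"
    and "x'*p + y'*q - k*(x'*p - y'*q) = 1 - k*r"
  shows "x'*p + y'*q \<noteq> -1"
proof
  assume "x'*p + y'*q = -1"
  then have "(x' + p)^2 + (y' + q)^2 = 0" using assms(1,2) by algebra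
  then have "x' + p = 0 \<and> y' + q = 0" by (simp only: sum_power2_eq_zero_iff)
  then have p: "p = - x'" and q: "q = - y'" by simp_all
  have "1 - k*r = 0" using assms(5,6) unfolding p q by (simp add: algebra_simps)
  moreover have "- (x'^2 + y'^2) + k*(x'^2 - y'^2) = 1 - k*r"
    using assms(7) unfolding p q by (simp add: algebra_simps power2_eq_square)
  ultimately have "k*(x'^2 - y'^2) = k*r" using assms(1) by simp
  then have "x'^2 - y'^2 = r" using assms(3) by simp
  moreover have "x'^2 - y'^2 \<le> 1" using assms(1) zero_le_power2[of y'] by linarith
  ultimately show False using assms(4) by simp
qed

(* For a 3-periodic, k = J^2 (a^2 - b^2) and
   r = (a^2 + b^2) / (a^2 - b^2) (chord_relation_unit). *)
locale chord_triangle =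
  fixes k r x1 y1 x2 y2 x3 y3 :: real
  assumes unit1: "x1^2 + y1^2 = 1" and unit2: "x2^2 + y2^2 = 1" and unit3: "x3^2 + y3^2 = 1"
    and chord12: "x1*x2 + y1*y2 - k*(x1*x2 - y1*y2) = 1 - k*r"
    and chord13: "x1*x3 + y1*y3 - k*(x1*x3 - y1*y3) = 1 - k*r"
    and chord23: "x2*x3 + y2*y3 - k*(x2*x3 - y2*y3) = 1 - k*r"
    and k_pos: "k > 0" and r_gt_1: "r > 1"
    and distinct12: "(x1, y1) \<noteq> (x2, y2)" and distinct13: "(x1, y1) \<noteq> (x3, y3)"
    and distinct23: "(x2, y2) \<noteq> (x3, y3)"
begin

lemma k_nonzero: "k \<noteq> 0"
  using k_pos by simp

lemma complex_chord_polys: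
  "chord_poly (complex_of_real k) (complex_of_real r) (Complex x1 y1) (Complex x2 y2) = 0"
  "chord_poly (complex_of_real k) (complex_of_real r) (Complex x1 y1) (Complex x3 y3) = 0"
  "chord_poly (complex_of_real k) (complex_of_real r) (Complex x2 y2) (Complex x3 y3) = 0"
  by (simp_all add: chord_poly_unit_complex unit1 unit2 unit3 chord12 chord13 chord23)

lemma triangle_constraint: "2*k*r = 3 - k^2"
proof -
  have "Complex x2 y2 \<noteq> Complex x3 y3" using distinct23 by (simp add: complex_eq_iff)
  with complex_chord_polys
  have "2 * complex_of_real k * complex_of_real r = 3 - (complex_of_real k)^2"
    by (rule chord_poly_triangle_constraint)
      (simp_all add: k_nonzero unit_complex_quartic_nonzero unit1 r_gt_1)
  then have "complex_of_real (2*k*r) = complex_of_real (3 - k^2)" by simp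
  then show ?thesis by (simp only: of_real_eq_iff)
qed

lemma discriminant_relation:
  "4*(k*r - 1)^2*((x1*x2 + y1*y2 - 1)*(x1*x3 + y1*y3 - 1)*(x2*x3 + y2*y3 - 1))
    = - (k^3*((r - (x1^2 - y1^2))*(r - (x2^2 - y2^2))*(r - (x3^2 - y3^2))))"
  (is "?L = ?R")
proof -
  define z1 z2 z3 where "z1 = Complex x1 y1" and "z2 = Complex x2 y2" and "z3 = Complex x3 y3"
  define K R where "K = complex_of_real k" and "R = complex_of_real r"
  note polys = complex_chord_polys[folded z1_def z2_def z3_def K_def R_def]
  have "z2 \<noteq> z3" using distinct23 unfolding z2_def z3_def by (simp add: complex_eq_iff)
  have "1 - K*z1^2 \<noteq> 0"
  proof
    assume "1 - K*z1^2 = 0"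
    then have "1 - k*(x1^2 - y1^2) = 0" "k*(x1*y1) = 0"
      unfolding K_def z1_def by (simp_all add: complex_eq_iff power2_eq_square algebra_simps)
    then have "y1 = 0" "k = 1" using k_pos unit1 by auto
    with chord12 r_gt_1 show False by simp
  qed
  have constraint: "2*K*R = 3 - K^2" unfolding K_def R_def
    using arg_cong[OF triangle_constraint, of complex_of_real] by simp
  have "K \<noteq> 0" using k_nonzero unfolding K_def by simp
  note symmetric = chord_poly_symmetric_functions
    [OF polys(1,2) \<open>z2 \<noteq> z3\<close> \<open>1 - K*z1^2 \<noteq> 0\<close> constraint]
  have "8*(z1*z2*z3)^2 * (4*(K*R - 1)^2*(complex_of_real (x1*x2 + y1*y2 - 1)
        * complex_of_real (x1*x3 + y1*y3 - 1) * complex_of_real (x2*x3 + y2*y3 - 1)))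
      = 4*(K*R - 1)^2*((z1 - z2)^2*(z1 - z3)^2*(z2 - z3)^2)"
    unfolding z1_def z2_def z3_def
      unit_complex_diff_sq[OF unit1 unit2] unit_complex_diff_sq[OF unit1 unit3]
      unit_complex_diff_sq[OF unit2 unit3]
    by algebra
  also have "\<dots> = K^3*((z1^4 - 2*R*z1^2 + 1)*(z2^4 - 2*R*z2^2 + 1)*(z3^4 - 2*R*z3^2 + 1))"
    using discriminant_identity[OF symmetric constraint \<open>K \<noteq> 0\<close>]
    by (simp add: power_mult_distrib)
  also have "\<dots> = 8*(z1*z2*z3)^2 * (- (K^3*(complex_of_real (r - (x1^2 - y1^2))
        * complex_of_real (r - (x2^2 - y2^2)) * complex_of_real (r - (x3^2 - y3^2)))))"
    unfolding z1_def z2_def z3_def R_def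
      unit_complex_quartic[OF unit1] unit_complex_quartic[OF unit2] unit_complex_quartic[OF unit3]
    by algebra
  finally have eq: "8*(z1*z2*z3)^2 * complex_of_real ?L = 8*(z1*z2*z3)^2 * complex_of_real ?R"
    unfolding K_def R_def by simp
  have "z1 \<noteq> 0" "z2 \<noteq> 0" "z3 \<noteq> 0"
    using unit1 unit2 unit3 unfolding z1_def z2_def z3_def by (auto simp: complex_eq_iff)
  then have "8*(z1*z2*z3)^2 \<noteq> 0" by simp
  with eq have "complex_of_real ?L = complex_of_real ?R" by (metis mult_left_cancel)
  then show ?thesis by (simp only: of_real_eq_iff)
qed

lemma cross_nonzero:
  "x2*y3 - x3*y2 \<noteq> 0" "x3*y1 - x1*y3 \<noteq> 0" "x1*y2 - x2*y1 \<noteq> 0"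
proof -
  have chord21: "x2*x1 + y2*y1 - k*(x2*x1 - y2*y1) = 1 - k*r"
    and chord31: "x3*x1 + y3*y1 - k*(x3*x1 - y3*y1) = 1 - k*r"
    and chord32: "x3*x2 + y3*y2 - k*(x3*x2 - y3*y2) = 1 - k*r"
    using chord12 chord13 chord23 by (simp_all add: mult.commute)
  show "x2*y3 - x3*y2 \<noteq> 0"
    using unit2 unit3 distinct23
      chord_relations_not_antipodal[OF unit2 unit3 k_nonzero r_gt_1 chord12 chord13 chord23] by (rule unit_cross_nonzero)
  show "x3*y1 - x1*y3 \<noteq> 0"
    using unit3 unit1 distinct13[symmetric]
      chord_relations_not_antipodal[OF unit3 unit1 k_nonzero r_gt_1 chord23 chord21 chord31] by (rule unit_cross_nonzero)
  show "x1*y2 - x2*y1 \<noteq> 0"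
    using unit1 unit2 distinct12
      chord_relations_not_antipodal[OF unit1 unit2 k_nonzero r_gt_1 chord31 chord32 chord12] by (rule unit_cross_nonzero)
qed

lemma cos_outer_angle_product:
  assumes "a \<noteq> 0" "b \<noteq> 0" and r: "r*(a^2 - b^2) = a^2 + b^2"
  shows "cos (outer_angle a b (a*x2, b*y2) (a*x3, b*y3)) * cos (outer_angle a b (a*x3, b*y3) (a*x1, b*y1))
      * cos (outer_angle a b (a*x1, b*y1) (a*x2, b*y2)) = (k*r - 1)/4"
    (is "?C = _")
proof -
  define t1 t2 t3 where "t1 = b^2*x1^2 + a^2*y1^2" and "t2 = b^2*x2^2 + a^2*y2^2"
    and "t3 = b^2*x3^2 + a^2*y3^2"
  define n12 n23 n31 where "n12 = b^2*x1*x2 + a^2*y1*y2" and "n23 = b^2*x2*x3 + a^2*y2*y3"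
    and "n31 = b^2*x3*x1 + a^2*y3*y1"
  have "t1 > 0" "t2 > 0" "t3 > 0"
    unfolding t1_def t2_def t3_def using unit1 unit2 unit3 assms(1,2)
    by (simp_all add: unit_weighted_sq_pos)
  have "?C = - (n12*n23*n31) / ((sqrt t1 * sqrt t1)*(sqrt t2 * sqrt t2)*(sqrt t3 * sqrt t3))"
    unfolding cos_outer_angle_unit[OF assms(1,2) unit2 unit3 cross_nonzero(1)]
      cos_outer_angle_unit[OF assms(1,2) unit3 unit1 cross_nonzero(2)]
      cos_outer_angle_unit[OF assms(1,2) unit1 unit2 cross_nonzero(3)]
      t1_def[symmetric] t2_def[symmetric] t3_def[symmetric]
      n12_def[symmetric] n23_def[symmetric] n31_def[symmetric]
    by (simp add: field_simps)
  also have "\<dots> = - (n12*n23*n31) / (t1*t2*t3)"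
    using \<open>t1 > 0\<close> \<open>t2 > 0\<close> \<open>t3 > 0\<close> by simp
  also have "\<dots> = (k*r - 1)/4"
  proof -
    define c where "c = a^2 - b^2"
    have n: "2*k*n12 = c*(k*r - 1)*(x1*x2 + y1*y2 - 1)" "2*k*n23 = c*(k*r - 1)*(x2*x3 + y2*y3 - 1)"
      "2*k*n31 = c*(k*r - 1)*(x1*x3 + y1*y3 - 1)"
      unfolding n12_def n23_def n31_def c_def using chord12 chord23 chord13 r by algebra+
    have t: "c*(r - (x1^2 - y1^2)) = 2*t1" "c*(r - (x2^2 - y2^2)) = 2*t2"
      "c*(r - (x3^2 - y3^2)) = 2*t3"
      unfolding t1_def t2_def t3_def c_def using unit1 unit2 unit3 r by algebra+
    have "8*k^3*(-4*(n12*n23*n31)) = -4*((2*k*n12)*(2*k*n23)*(2*k*n31))" by algebra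
    also have "\<dots> = -(k*r - 1)*c^3*(4*(k*r - 1)^2
        *((x1*x2 + y1*y2 - 1)*(x1*x3 + y1*y3 - 1)*(x2*x3 + y2*y3 - 1)))"
      unfolding n by algebra
    also have "\<dots> = (k*r - 1)*k^3
        *((c*(r - (x1^2 - y1^2)))*(c*(r - (x2^2 - y2^2)))*(c*(r - (x3^2 - y3^2))))"
      unfolding discriminant_relation by algebra
    also have "\<dots> = 8*k^3*((k*r - 1)*(t1*t2*t3))" unfolding t by algebra
    finally have "8*k^3*(-4*(n12*n23*n31)) = 8*k^3*((k*r - 1)*(t1*t2*t3))" .
    moreover have "8*k^3 \<noteq> 0" using k_nonzero by simp
    ultimately have "-4*(n12*n23*n31) = (k*r - 1)*(t1*t2*t3)" by (metis mult_left_cancel)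
    then show ?thesis using \<open>t1 > 0\<close> \<open>t2 > 0\<close> \<open>t3 > 0\<close> by (simp add: field_simps)
  qed
  finally show ?thesis .
qed

end

section \<open>The Joachimsthal constant and the theorem\<close>

lemma joachimsthal3_perimeter3_eq:
  assumes "a > b" "b > 0" "k > 0"
    and constraint: "2*k*r = 3 - k^2" and r: "r*(a^2 - b^2) = a^2 + b^2"
  shows "joachimsthal3 a b * perimeter3 a b / 4 - 1 = (k*r - 1)/4"
proof -
  define c where "c = a^2 - b^2"
  have c: "c > 0" unfolding c_def using assms(1,2) by (simp add: power_strict_mono)
  have "r*c > 0" using r assms(2) unfolding c_def by (simp add: add_nonneg_pos)
  then have "r > 0" using c by (simp add: zero_less_mult_iff)
  have "(c*(k + r))^2 = 3*c^2 + (r*c)^2" using constraint by algebra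
  also have "\<dots> = 4*(a^4 - a^2*b^2 + b^4)" using r unfolding c_def by algebra
  finally have "(c*(k + r)/2)^2 = a^4 - a^2*b^2 + b^4" by (simp add: power_divide)
  then have delta: "delta_ell a b = c*(k + r)/2"
    unfolding delta_ell_def using c \<open>k > 0\<close> \<open>r > 0\<close> by (simp add: real_sqrt_unique)
  have "joachimsthal3 a b = sqrt (c*k) / c"
    unfolding joachimsthal3_def delta c_def[symmetric] using r unfolding c_def[symmetric]
    by (simp add: algebra_simps)
  then have J: "joachimsthal3 a b ^ 2 = k / c"
    using c \<open>k > 0\<close> by (simp add: power_divide power2_eq_square)
  have "joachimsthal3 a b * perimeter3 a b / 4 - 1
      = (delta_ell a b + a^2 + b^2) * joachimsthal3 a b ^ 2 / 2 - 1"
    unfolding perimeter3_def by (simp add: power2_eq_square)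
  also have "\<dots> = (c*(k + r)/2 + r*c) * (k/c) / 2 - 1"
    unfolding delta J using r unfolding c_def by (simp add: algebra_simps)
  also have "\<dots> = (k^2 + 3*k*r)/4 - 1" using c by (simp add: field_simps power2_eq_square)
  also have "\<dots> = (k*r - 1)/4" using constraint by (simp add: field_simps)
  finally show ?thesis .
qed

lemma three_periodic_chord_triangle:
  assumes "a > b" "b > 0"
    and periodic: "three_periodic a b (a*x1, b*y1) (a*x2, b*y2) (a*x3, b*y3)"
    and unit: "x1^2 + y1^2 = 1" "x2^2 + y2^2 = 1" "x3^2 + y3^2 = 1"
  obtains k where "chord_triangle k ((a^2 + b^2)/(a^2 - b^2)) x1 y1 x2 y2 x3 y3"
proof
  have "a \<noteq> 0" "b \<noteq> 0" using assms(1,2) by auto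
  have distinct: "(x1, y1) \<noteq> (x2, y2)" "(x1, y1) \<noteq> (x3, y3)" "(x2, y2) \<noteq> (x3, y3)"
    using periodic unfolding three_periodic_def by auto
  note bounce = billiard_bounce_unit[OF \<open>a \<noteq> 0\<close> \<open>b \<noteq> 0\<close>]
  define g where "g = (1 - (x1*x2 + y1*y2)) / norm ((a*x2, b*y2) - (a*x1, b*y1))"
  have g13: "(1 - (x1*x3 + y1*y3)) / norm ((a*x3, b*y3) - (a*x1, b*y1)) = g"
    using bounce[OF unit(1)] periodic unfolding g_def three_periodic_def by simp
  have "(1 - (x2*x1 + y2*y1)) / norm ((a*x1, b*y1) - (a*x2, b*y2)) = g"
    unfolding g_def norm_minus_commute[of "(a*x1, b*y1)"] by (simp add: mult.commute)
  moreover have "(1 - (x2*x1 + y2*y1)) / norm ((a*x1, b*y1) - (a*x2, b*y2))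
      = (1 - (x2*x3 + y2*y3)) / norm ((a*x3, b*y3) - (a*x2, b*y2))"
    using periodic unfolding three_periodic_def by (blast intro: bounce[OF unit(2)])
  ultimately have g23: "(1 - (x2*x3 + y2*y3)) / norm ((a*x3, b*y3) - (a*x2, b*y2)) = g"
    by simp
  define c where "c = a^2 - b^2"
  have "c > 0" unfolding c_def using assms(1,2) by (simp add: power_strict_mono)
  have "g > 0"
    using unit_inner_lt_1[OF unit(1,2) distinct(1)] distinct(1) \<open>a \<noteq> 0\<close> \<open>b \<noteq> 0\<close>
    unfolding g_def by (auto intro!: divide_pos_pos simp: zero_prod_def)
  have kr: "g^2*c * ((a^2 + b^2)/c) = g^2*(a^2 + b^2)" using \<open>c > 0\<close> by simp
  show "chord_triangle (g^2*c) ((a^2 + b^2)/(a^2 - b^2)) x1 y1 x2 y2 x3 y3"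
    unfolding c_def[symmetric]
  proof
    show "x1*x2 + y1*y2 - g^2*c*(x1*x2 - y1*y2) = 1 - g^2*c*((a^2 + b^2)/c)"
      "x1*x3 + y1*y3 - g^2*c*(x1*x3 - y1*y3) = 1 - g^2*c*((a^2 + b^2)/c)"
      "x2*x3 + y2*y3 - g^2*c*(x2*x3 - y2*y3) = 1 - g^2*c*((a^2 + b^2)/c)"
      unfolding kr
      using chord_relation_unit[OF unit(1,2) distinct(1) \<open>a \<noteq> 0\<close> \<open>b \<noteq> 0\<close> g_def[symmetric], folded c_def]
        chord_relation_unit[OF unit(1,3) distinct(2) \<open>a \<noteq> 0\<close> \<open>b \<noteq> 0\<close> g13, folded c_def]
        chord_relation_unit[OF unit(2,3) distinct(3) \<open>a \<noteq> 0\<close> \<open>b \<noteq> 0\<close> g23, folded c_def]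
      by simp_all
    show "g^2*c > 0" using \<open>g > 0\<close> \<open>c > 0\<close> by simp
    show "(a^2 + b^2)/c > 1" using \<open>c > 0\<close> \<open>b \<noteq> 0\<close> unfolding c_def by simp
  qed (use unit distinct in auto)
qed

theorem mainTheorem8:
  fixes a b :: real and P1 P2 P3 :: "real \<times> real"
  assumes "a > b" and "b > 0"
    and "three_periodic a b P1 P2 P3"
  shows "cos (outer_angle a b P2 P3) * cos (outer_angle a b P3 P1) * cos (outer_angle a b P1 P2)
           = joachimsthal3 a b * perimeter3 a b / 4 - 1"
proof -
  have "a \<noteq> 0" "b \<noteq> 0" using assms(1,2) by auto
  note param = on_ellipse_unit_param[OF _ \<open>a \<noteq> 0\<close> \<open>b \<noteq> 0\<close>]
  obtain x1 y1 x2 y2 x3 y3 where P: "P1 = (a*x1, b*y1)" "P2 = (a*x2, b*y2)" "P3 = (a*x3, b*y3)"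
    and unit: "x1^2 + y1^2 = 1" "x2^2 + y2^2 = 1" "x3^2 + y3^2 = 1"
    using param[of P1] param[of P2] param[of P3] assms(3) unfolding three_periodic_def by metis
  define r where "r = (a^2 + b^2)/(a^2 - b^2)"
  have r: "r*(a^2 - b^2) = a^2 + b^2" unfolding r_def using assms(1,2) by (simp add: power_strict_mono)
  obtain k where "chord_triangle k r x1 y1 x2 y2 x3 y3"
    using three_periodic_chord_triangle[OF assms(1,2) assms(3)[unfolded P] unit] unfolding r_def .
  then interpret chord_triangle k r x1 y1 x2 y2 x3 y3 .
  show ?thesis
    unfolding P cos_outer_angle_product[OF \<open>a \<noteq> 0\<close> \<open>b \<noteq> 0\<close> r]
    using joachimsthal3_perimeter3_eq[OF assms(1,2) k_pos triangle_constraint r] by simp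
qed

end
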